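(* Let $\delta\in(0,1)$ and let $I=\{a_1,\dots,a_N\}$ be a set of $N$ real values presented in a uniformly random order. Run the following online procedure: set $A=\emptyset$, $u=N\delta/2$, $M=-\infty$, $L=4\ln(2/\delta)$; for $i=1,\dots,N$, when the $i$-th value $x_i$ arrives, if $x_i>M$ then set $M\leftarrow x_i$ and, if moreover $i\ge u$ and $|A|<L$, add $x_i$ to $A$. At the end output $A$ and $A^*=\max_{x\in A}x$. Then with probability at least $1-\delta$, $A^*=\max(a_1,\dots,a_N)$. *)

theory Defs
  imports "HOL-Probability.Probability" "HOL-Combinatorics.Multiset_Permutations"
begin

text \<open>Parameters: threshold u, cap L, index i of the next arriving value (1-based),
  current maximum M (starting at minus infinity), current set A.\<close>
fun online_run :: "real \<Rightarrow> real \<Rightarrow> nat \<Rightarrow> ereal \<Rightarrow> real set \<Rightarrow> real list \<Rightarrow> real set" where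
  "online_run u L i M A [] = A"
| "online_run u L i M A (x # xs) =
     (if ereal x > M then
        online_run u L (Suc i) (ereal x)
          (if real i \<ge> u \<and> real (card A) < L then insert x A else A) xs
      else online_run u L (Suc i) M A xs)"

definition online_A :: "real \<Rightarrow> real list \<Rightarrow> real set" where
  "online_A \<delta> xs = online_run (real (length xs) * \<delta> / 2) (4 * ln (2 / \<delta>)) 1 (-\<infinity>) {} xs"

text \<open>A* = max of A (as an extended real; minus infinity if A is empty).\<close>
definition online_Astar :: "real \<Rightarrow> real list \<Rightarrow> ereal" where
  "online_Astar \<delta> xs = Sup (ereal ` online_A \<delta> xs)"

end

theory Submission
  imports Defs
begin

(*
  The procedure can only miss the maximum if (a) the maximum arrives before time u, or
  (b) at least L + 1 late records (values exceeding everything seen before, arriving at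
  times \<ge> u) occur: every late record takes a slot of A, and as long as a slot is free
  the maximum is itself a late record and is kept.
  The maximum sits at each position with probability 1/N, so (a) has probability at
  most u/N = \<delta>/2.  The last of j arrivals is their maximum with probability 1/j,
  independently of the relative order of the others; peeling off the last arrival
  therefore gives E[2^R] = \<Prod>_{u \<le> j \<le> N} (1 + 1/j) \<le> 4/\<delta> for the number R of late
  records, and Markov's inequality with 2^(L+1) \<ge> 8/\<delta>^2 bounds (b) by \<delta>/2.
*)

lemma sum_permutations_of_set_Cons:
  assumes "finite S" "S \<noteq> {}"
  shows "(\<Sum>xs\<in>permutations_of_set S. f xs) = (\<Sum>x\<in>S. \<Sum>ys\<in>permutations_of_set (S - {x}). f (x # ys))"
proof -
  have "(\<Sum>xs\<in>permutations_of_set S. f xs) = (\<Sum>x\<in>S. \<Sum>xs\<in>(#) x ` permutations_of_set (S - {x}). f xs)"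
    unfolding permutations_of_set_nonempty[OF assms(2)] using assms(1)
    by (intro sum.UNION_disjoint) auto
  then show ?thesis by (simp add: sum.reindex)
qed

lemma sum_permutations_of_set_snoc:
  assumes "finite S" "S \<noteq> {}"
  shows "(\<Sum>xs\<in>permutations_of_set S. f xs) = (\<Sum>x\<in>S. \<Sum>ys\<in>permutations_of_set (S - {x}). f (ys @ [x]))"
proof -
  have rev: "(\<Sum>xs\<in>permutations_of_set T. g xs) = (\<Sum>xs\<in>permutations_of_set T. g (rev xs))" for T g
    using sum.reindex[of rev "permutations_of_set T" g] by (simp add: inj_on_def)
  show ?thesis
    by (subst (1 2) rev) (simp add: sum_permutations_of_set_Cons[OF assms])
qed

lemma card_permutations_of_set_nth_eq:
  assumes "finite S" "z \<in> S" "k < card S"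
  shows "card {xs \<in> permutations_of_set S. xs ! k = z} = fact (card S - 1)"
  using assms
proof (induction k arbitrary: S)
  case 0
  have "card {xs \<in> permutations_of_set S. xs ! 0 = z} = (\<Sum>xs\<in>permutations_of_set S. of_bool (xs ! 0 = z))"
    by (simp add: Int_def)
  also have "\<dots> = (\<Sum>x\<in>S. of_bool (x = z) * fact (card S - 1))"
    using 0 by (subst sum_permutations_of_set_Cons) (auto simp del: sum_of_bool_eq)
  also have "\<dots> = fact (card S - 1)"
    using 0 by (simp add: sum.delta)
  finally show ?case .
next
  case (Suc k)
  have "card {xs \<in> permutations_of_set S. xs ! Suc k = z} =
        (\<Sum>xs\<in>permutations_of_set S. of_bool (xs ! Suc k = z))"
    by (simp add: Int_def)
  also have "\<dots> = (\<Sum>x\<in>S. card {ys \<in> permutations_of_set (S - {x}). ys ! k = z})"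
    using Suc.prems by (subst sum_permutations_of_set_Cons) (auto simp: Int_def)
  also have "\<dots> = (\<Sum>x\<in>S - {z}. card {ys \<in> permutations_of_set (S - {x}). ys ! k = z})"
  proof (rule sum.mono_neutral_right)
    have "ys ! k \<noteq> z" if ys: "ys \<in> permutations_of_set (S - {z})" for ys
    proof -
      have "k < length ys"
        using Suc.prems length_finite_permutations_of_set[OF ys] by simp
      then show ?thesis using nth_mem permutations_of_setD(1)[OF ys] by blast
    qed
    then show "\<forall>x\<in>S - (S - {z}). card {ys \<in> permutations_of_set (S - {x}). ys ! k = z} = 0"
      by auto
  qed (use Suc.prems in auto)
  also have "\<dots> = (\<Sum>x\<in>S - {z}. fact (card S - 2))"
    using Suc.prems by (intro sum.cong refl) (auto simp: Suc.IH numeral_2_eq_2)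
  also have "\<dots> = fact (card S - 1)"
  proof -
    have "card S - 1 = Suc (card S - 2)"
      using Suc.prems(3) by simp
    then show ?thesis
      by (simp only: sum_constant card_Diff_singleton[OF Suc.prems(2)] fact_Suc of_nat_id)
  qed
  finally show ?case .
qed

lemma prob_permutations_of_set_nth_eq:
  assumes "finite S" "z \<in> S" "k < card S"
  shows "measure_pmf.prob (pmf_of_set (permutations_of_set S)) {xs. xs ! k = z} = 1 / card S"
proof -
  have "fact (card S) = real (card S) * fact (card S - 1)"
    using assms(3) by (simp add: fact_reduce)
  then show ?thesis
    using assms card_permutations_of_set_nth_eq[OF assms]
    by (simp add: measure_pmf_of_set Int_def)
qed

lemma prob_permutations_of_set_nth_before_le:
  assumes "finite S" "z \<in> S" "0 \<le> u"
  shows "measure_pmf.prob (pmf_of_set (permutations_of_set S))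
           {xs. \<exists>k<card S. real (Suc k) < u \<and> xs ! k = z} \<le> u / card S"
proof -
  let ?p = "pmf_of_set (permutations_of_set S)"
  let ?K = "{k. k < card S \<and> real (Suc k) < u}"
  have "{xs. \<exists>k<card S. real (Suc k) < u \<and> xs ! k = z} = (\<Union>k\<in>?K. {xs. xs ! k = z})"
    by auto
  then have "measure_pmf.prob ?p {xs. \<exists>k<card S. real (Suc k) < u \<and> xs ! k = z}
      \<le> (\<Sum>k\<in>?K. measure_pmf.prob ?p {xs. xs ! k = z})"
    by (simp add: measure_pmf.finite_measure_subadditive_finite)
  also have "\<dots> = real (card ?K) / card S"
    using assms by (simp add: prob_permutations_of_set_nth_eq)
  also have "\<dots> \<le> u / card S"
  proof (intro divide_right_mono)
    have "?K \<subseteq> {..<nat \<lfloor>u\<rfloor>}"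
      by (auto simp: le_nat_floor less_eq_Suc_le)
    then have "card ?K \<le> nat \<lfloor>u\<rfloor>"
      by (metis card_lessThan card_mono finite_lessThan)
    then show "real (card ?K) \<le> u"
      using assms(3) by linarith
  qed simp
  finally show ?thesis .
qed

lemma measure_pmf_prob_ge_union_bound:
  assumes "set_pmf p - (A \<union> B) \<subseteq> G"
  shows "1 - measure_pmf.prob p A - measure_pmf.prob p B \<le> measure_pmf.prob p G"
proof -
  have "1 - measure_pmf.prob p A - measure_pmf.prob p B \<le> 1 - measure_pmf.prob p (A \<union> B)"
    using measure_Un_le[of A "measure_pmf p" B] by simp
  also have "\<dots> = measure_pmf.prob p (UNIV - (A \<union> B))"
    using measure_pmf.prob_compl[of "A \<union> B" p] by simp
  also have "\<dots> \<le> measure_pmf.prob p G"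
    using assms by (intro measure_pmf.finite_measure_mono_AE) (auto simp: AE_measure_pmf_iff)
  finally show ?thesis .
qed

lemma square_le_two_powr_four_ln:
  fixes x :: real
  assumes "1 \<le> x"
  shows "x ^ 2 \<le> 2 powr (4 * ln x)"
proof -
  have "x ^ 2 = x powr 2"
    using assms by (simp add: powr_numeral)
  also have "\<dots> \<le> x powr (4 * ln 2)"
    using assms ln2_ge_two_thirds by (intro powr_mono) auto
  also have "\<dots> = 2 powr (4 * ln x)"
    using assms by (simp add: powr_def)
  finally show ?thesis .
qed

(* Counts the values that online_run would add to A if there were no cap L. *)
fun late_records :: "real \<Rightarrow> nat \<Rightarrow> ereal \<Rightarrow> real list \<Rightarrow> nat" where
  "late_records u i M [] = 0"
| "late_records u i M (x # xs) =
     (if ereal x > M then of_bool (u \<le> real i) + late_records u (Suc i) (ereal x) xs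
      else late_records u (Suc i) M xs)"

lemma late_records_snoc:
  "late_records u i M (xs @ [x]) = late_records u i M xs +
     of_bool (M < ereal x \<and> (\<forall>y\<in>set xs. y < x) \<and> u \<le> real (i + length xs))"
proof (induction xs arbitrary: i M)
  case (Cons a xs)
  show ?case
  proof (cases "M < ereal a")
    case True
    then have "M < ereal x \<and> a < x \<longleftrightarrow> a < x"
      using order.strict_trans[of M "ereal a" "ereal x"] by auto
    then show ?thesis using True Cons[of "Suc i" "ereal a"] by auto
  next
    case False
    then have "M < ereal x \<and> a < x \<longleftrightarrow> M < ereal x"
      using order.strict_trans1[of "ereal a" M "ereal x"] by auto
    then show ?thesis using False Cons[of "Suc i" M] by auto
  qed
qed simp

lemma late_records_snoc_permutation:
  assumes "finite S" "x \<in> S" "ys \<in> permutations_of_set (S - {x})"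
  shows "late_records u 1 (-\<infinity>) (ys @ [x])
           = late_records u 1 (-\<infinity>) ys + of_bool (x = Max S \<and> u \<le> real (card S))"
proof -
  have "set ys = S - {x}" "length ys = card S - 1"
    using assms by (auto simp: permutations_of_setD length_finite_permutations_of_set)
  moreover have "(\<forall>y\<in>S - {x}. y < x) \<longleftrightarrow> x = Max S"
    using assms(1,2) by (auto simp: order.strict_iff_order intro!: Max_eqI[symmetric])
  moreover have "card S \<noteq> 0"
    using assms(1,2) by auto
  ultimately show ?thesis by (auto simp: late_records_snoc)
qed

lemma sum_two_pow_late_records:
  assumes "finite S"
  shows "(\<Sum>xs\<in>permutations_of_set S. 2 ^ late_records u 1 (-\<infinity>) xs)
           = (\<Prod>j=1..card S. j + of_bool (u \<le> real j))"
  using assms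
proof (induction "card S" arbitrary: S)
  case 0
  then show ?case by simp
next
  case (Suc n)
  let ?c = "of_bool (u \<le> real (Suc n)) :: nat"
  have "S \<noteq> {}" using Suc.hyps(2) by auto
  have "(\<Sum>xs\<in>permutations_of_set S. 2 ^ late_records u 1 (-\<infinity>) xs)
      = (\<Sum>x\<in>S. \<Sum>ys\<in>permutations_of_set (S - {x}). 2 ^ late_records u 1 (-\<infinity>) (ys @ [x]))"
    by (rule sum_permutations_of_set_snoc[OF Suc.prems \<open>S \<noteq> {}\<close>])
  also have "\<dots> = (\<Sum>x\<in>S. (1 + of_bool (x = Max S) * ?c) *
                     (\<Sum>ys\<in>permutations_of_set (S - {x}). 2 ^ late_records u 1 (-\<infinity>) ys))"
    unfolding sum_distrib_left using Suc.prems Suc.hyps(2)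
    by (intro sum.cong refl, subst late_records_snoc_permutation) auto
  also have "\<dots> = (\<Sum>x\<in>S. (1 + of_bool (x = Max S) * ?c) * (\<Prod>j=1..n. j + of_bool (u \<le> real j)))"
  proof (intro sum.cong refl)
    fix x assume "x \<in> S"
    then have "card (S - {x}) = n"
      using Suc.hyps(2) by simp
    then show "(1 + of_bool (x = Max S) * ?c) *
          (\<Sum>ys\<in>permutations_of_set (S - {x}). 2 ^ late_records u 1 (-\<infinity>) ys)
        = (1 + of_bool (x = Max S) * ?c) * (\<Prod>j=1..n. j + of_bool (u \<le> real j))"
      using Suc.hyps(1)[of "S - {x}"] Suc.prems by simp
  qed
  also have "\<dots> = (Suc n + ?c) * (\<Prod>j=1..n. j + of_bool (u \<le> real j))"
    using Suc.hyps(2) Suc.prems \<open>S \<noteq> {}\<close>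
    by (simp add: sum_distrib_right[symmetric] sum.distrib sum.delta)
  also have "\<dots> = (\<Prod>j=1..Suc n. j + of_bool (u \<le> real j))"
    by (simp add: prod.cl_ivl_Suc)
  finally show ?case using Suc.hyps(2) by simp
qed

lemma prod_add_of_bool_le:
  "real (\<Prod>j=1..n. j + of_bool (u \<le> real j)) \<le> fact n * max 1 ((real n + 1) / max 1 u)"
proof (induction n)
  case 0
  then show ?case by simp
next
  case (Suc n)
  let ?m = "max 1 u"
  show ?case
  proof (cases "u \<le> real (Suc n)")
    case False
    have "real (\<Prod>j=1..Suc n. j + of_bool (u \<le> real j)) = real (Suc n) * real (\<Prod>j=1..n. j + of_bool (u \<le> real j))"
      using False by (simp add: prod.cl_ivl_Suc algebra_simps)
    also have "\<dots> \<le> real (Suc n) * (fact n * max 1 ((real n + 1) / ?m))"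
      by (intro mult_left_mono Suc.IH) simp
    also have "\<dots> \<le> real (Suc n) * (fact n * max 1 ((real (Suc n) + 1) / ?m))"
      by (intro mult_left_mono max.mono divide_right_mono) auto
    finally show ?thesis by simp
  next
    case True
    then have "1 \<le> (real n + 1) / ?m" by simp
    then have IH: "real (\<Prod>j=1..n. j + of_bool (u \<le> real j)) \<le> fact n * ((real n + 1) / ?m)"
      using Suc.IH by simp
    have "real (\<Prod>j=1..Suc n. j + of_bool (u \<le> real j)) = (real n + 2) * real (\<Prod>j=1..n. j + of_bool (u \<le> real j))"
      using True by (simp add: prod.cl_ivl_Suc algebra_simps)
    also have "\<dots> \<le> (real n + 2) * (fact n * ((real n + 1) / ?m))"
      by (intro mult_left_mono IH) simp
    also have "\<dots> = fact (Suc n) * ((real (Suc n) + 1) / ?m)"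
      by (simp add: field_simps)
    also have "\<dots> \<le> fact (Suc n) * max 1 ((real (Suc n) + 1) / ?m)"
      by (intro mult_left_mono) auto
    finally show ?thesis .
  qed
qed

lemma prob_late_records_ge:
  assumes "finite S"
  shows "measure_pmf.prob (pmf_of_set (permutations_of_set S)) {xs. t \<le> real (late_records u 1 (-\<infinity>) xs)}
           \<le> max 1 ((real (card S) + 1) / max 1 u) / 2 powr t"
proof -
  let ?p = "pmf_of_set (permutations_of_set S)"
  let ?X = "\<lambda>xs. 2 ^ late_records u 1 (-\<infinity>) xs :: real"
  have "{xs. t \<le> real (late_records u 1 (-\<infinity>) xs)} = {xs \<in> space ?p. 2 powr t \<le> ?X xs}"
    by (auto simp: powr_realpow[symmetric])
  moreover have "measure_pmf.prob ?p {xs \<in> space ?p. 2 powr t \<le> ?X xs} \<le> measure_pmf.expectation ?p ?X / 2 powr t"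
    using assms by (intro integral_Markov_inequality_measure[where A = "{}"] integrable_measure_pmf_finite) auto
  ultimately have "measure_pmf.prob ?p {xs. t \<le> real (late_records u 1 (-\<infinity>) xs)}
      \<le> measure_pmf.expectation ?p ?X / 2 powr t"
    by simp
  also have "measure_pmf.expectation ?p ?X = real (\<Prod>j=1..card S. j + of_bool (u \<le> real j)) / fact (card S)"
    using assms sum_two_pow_late_records[OF assms, of u, THEN arg_cong[where f = real]]
    by (simp add: integral_pmf_of_set)
  also have "\<dots> \<le> max 1 ((real (card S) + 1) / max 1 u)"
    using prod_add_of_bool_le[where n = "card S" and u = u] by (simp add: divide_le_eq mult.commute)
  finally show ?thesis by (simp add: divide_right_mono)
qed

lemma online_run_mono: "A \<subseteq> online_run u L i M A xs"
  by (induction xs arbitrary: i M A) (simp_all, meson order_trans subset_insertI)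

lemma online_run_subset: "online_run u L i M A xs \<subseteq> A \<union> set xs"
proof (induction xs arbitrary: i M A)
  case (Cons x xs)
  have "online_run u L (Suc i) M' A' xs \<subseteq> A \<union> set (x # xs)" if "A' \<subseteq> insert x A" for M' A'
    using Cons.IH[of "Suc i" M' A'] that by auto
  then show ?case by (simp add: subset_insertI)
qed simp

lemma mem_online_run:
  assumes "distinct xs" "k < length xs" "xs ! k = z" "\<forall>y\<in>set xs. y \<le> z" "M < ereal z" "u \<le> real (i + k)"
    and "real (card A + late_records u i M xs) < L + 1" "finite A"
  shows "z \<in> online_run u L i M A xs"
  using assms
proof (induction xs arbitrary: k i M A)
  case (Cons x xs)
  show ?case
  proof (cases k)
    case 0
    then have "x = z" "real (card A) < L" "u \<le> real i"
      using Cons.prems by auto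
    then show ?thesis
      using Cons.prems(5) online_run_mono[of "insert z A" u L "Suc i" "ereal z" xs] by auto
  next
    case (Suc k')
    then have "xs ! k' = z" "k' < length xs" "u \<le> real (Suc i + k')" "x < z"
      using Cons.prems nth_mem[of k' xs] by (auto simp: order.strict_iff_order)
    show ?thesis
    proof (cases "M < ereal x")
      case True
      define A' where "A' = (if u \<le> real i \<and> real (card A) < L then insert x A else A)"
      have "real (card A') \<le> real (card A) + of_bool (u \<le> real i)"
        unfolding A'_def using Cons.prems(8) by (auto simp: card_insert_if)
      then have "real (card A' + late_records u (Suc i) (ereal x) xs) < L + 1"
        using Cons.prems(7) True by auto
      moreover have "finite A'"
        using Cons.prems(8) unfolding A'_def by auto
      ultimately have "z \<in> online_run u L (Suc i) (ereal x) A' xs"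
        using Cons.IH \<open>xs ! k' = z\<close> \<open>k' < length xs\<close> \<open>u \<le> real (Suc i + k')\<close> \<open>x < z\<close> Cons.prems
        by auto
      then show ?thesis using True unfolding A'_def by simp
    next
      case False
      then show ?thesis
        using Cons.IH \<open>xs ! k' = z\<close> \<open>k' < length xs\<close> \<open>u \<le> real (Suc i + k')\<close> \<open>x < z\<close> Cons.prems
        by auto
    qed
  qed
qed simp

lemma online_Astar_eq_Max:
  fixes \<delta> :: real and xs :: "real list"
  defines "u \<equiv> real (length xs) * \<delta> / 2"
  assumes "distinct xs" "k < length xs" "xs ! k = Max (set xs)" "u \<le> real (Suc k)"
    and "real (late_records u 1 (-\<infinity>) xs) < 4 * ln (2 / \<delta>) + 1"
  shows "online_Astar \<delta> xs = ereal (Max (set xs))"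
proof -
  have "Max (set xs) \<in> online_A \<delta> xs"
    unfolding online_A_def u_def[symmetric] using assms
    by (intro mem_online_run[where k = k]) auto
  moreover have "online_A \<delta> xs \<subseteq> set xs"
    using online_run_subset unfolding online_A_def by fastforce
  ultimately show ?thesis
    unfolding online_Astar_def by (intro cSup_eq_maximum) auto
qed

lemma late_records_tail_bound:
  fixes \<delta> :: real
  assumes "0 < \<delta>" "\<delta> < 1" "1 \<le> N"
  shows "max 1 ((real N + 1) / max 1 (real N * \<delta> / 2)) / 2 powr (4 * ln (2 / \<delta>) + 1) \<le> \<delta> / 2"
proof -
  have "(real N + 1) / max 1 (real N * \<delta> / 2) = real N / max 1 (real N * \<delta> / 2) + 1 / max 1 (real N * \<delta> / 2)"
    by (simp add: add_divide_distrib)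
  also have "\<dots> \<le> real N / (real N * \<delta> / 2) + 1"
    using assms by (intro add_mono divide_left_mono) auto
  also have "\<dots> \<le> 4 / \<delta>"
    using assms by (simp add: field_simps)
  finally have "max 1 ((real N + 1) / max 1 (real N * \<delta> / 2)) \<le> 4 / \<delta>"
    using assms by (simp add: field_simps)
  moreover have "2 * (2 / \<delta>) ^ 2 \<le> 2 powr (4 * ln (2 / \<delta>) + 1)"
    using square_le_two_powr_four_ln[of "2 / \<delta>"] assms by (simp add: powr_add)
  ultimately have "max 1 ((real N + 1) / max 1 (real N * \<delta> / 2)) / 2 powr (4 * ln (2 / \<delta>) + 1)
      \<le> (4 / \<delta>) / (2 * (2 / \<delta>) ^ 2)"
    using assms by (intro frac_le) auto
  also have "\<dots> = \<delta> / 2"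
    using assms by (simp add: field_simps power2_eq_square)
  finally show ?thesis .
qed

theorem proposition1:
  fixes \<delta> :: real and I :: "real set"
  assumes "0 < \<delta>" "\<delta> < 1"
    and "finite I" "I \<noteq> {}"
  shows "measure_pmf.prob (pmf_of_set (permutations_of_set I))
           {xs. online_Astar \<delta> xs = ereal (Max I)} \<ge> 1 - \<delta>"
proof -
  define N where "N = card I"
  define u where "u = real N * \<delta> / 2"
  define early where "early = {xs. \<exists>k<N. real (Suc k) < u \<and> xs ! k = Max I}"
  define crowded where "crowded = {xs. 4 * ln (2 / \<delta>) + 1 \<le> real (late_records u 1 (-\<infinity>) xs)}"
  let ?p = "pmf_of_set (permutations_of_set I)"
  have "1 \<le> N"
    using assms(3,4) by (simp add: N_def Suc_leI card_gt_0_iff)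
  have "set_pmf ?p - (early \<union> crowded) \<subseteq> {xs. online_Astar \<delta> xs = ereal (Max I)}"
  proof
    fix xs assume xs: "xs \<in> set_pmf ?p - (early \<union> crowded)"
    then have "set xs = I" "distinct xs" "length xs = N"
      using assms(3,4) by (auto simp: permutations_of_setD length_finite_permutations_of_set N_def)
    moreover obtain k where "k < N" "xs ! k = Max I"
      using \<open>set xs = I\<close> \<open>length xs = N\<close> assms(3,4) by (metis Max_in in_set_conv_nth)
    moreover have "u \<le> real (Suc k)"
      using xs \<open>k < N\<close> \<open>xs ! k = Max I\<close> unfolding early_def by force
    moreover have "real (late_records u 1 (-\<infinity>) xs) < 4 * ln (2 / \<delta>) + 1"
      using xs unfolding crowded_def by auto
    ultimately show "xs \<in> {xs. online_Astar \<delta> xs = ereal (Max I)}"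
      using online_Astar_eq_Max[of xs k \<delta>] unfolding u_def by simp
  qed
  then have "1 - measure_pmf.prob ?p early - measure_pmf.prob ?p crowded
      \<le> measure_pmf.prob ?p {xs. online_Astar \<delta> xs = ereal (Max I)}"
    by (rule measure_pmf_prob_ge_union_bound)
  moreover have "measure_pmf.prob ?p early \<le> \<delta> / 2"
    using prob_permutations_of_set_nth_before_le[of I "Max I" u] assms \<open>1 \<le> N\<close>
    unfolding early_def N_def u_def by simp
  moreover have "measure_pmf.prob ?p crowded \<le> \<delta> / 2"
    using prob_late_records_ge[OF assms(3), of "4 * ln (2 / \<delta>) + 1" u]
      late_records_tail_bound[OF assms(1,2) \<open>1 \<le> N\<close>]
    unfolding crowded_def u_def N_def by linarith
  ultimately show ?thesis by linarith
qed

end
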